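(* Let $d\geq2$, let $\Omega\subset\mathbb{R}^d$ be open and let $\alpha>0$. For $x\in\Omega$ and $\omega\in\mathbb{S}^{d-1}$ define $\delta_\omega(x):=\inf\{|s|: s\in\mathbb{R},\ x+s\omega\notin\Omega\}$, and for $r>0$ define $\psi_r(x):=\frac{|\Omega\cap B_r(x)|}{|B_r(x)|}$, with $B_r(x)$ the open Euclidean ball and $|\cdot|$ Lebesgue measure. Then for every $x\in\Omega$ and every $r>0$, $$|\mathbb{S}^{d-1}|^{-1}\int_{\mathbb{S}^{d-1}}\frac{d\omega}{\delta_\omega(x)^\alpha}\geq\frac1{r^\alpha}\Bigl(\psi_r(x)^{-\alpha/d}-1\Bigr)$$ and $$|\mathbb{S}^{d-1}|^{-1}\int_{\mathbb{S}^{d-1}}\frac{d\omega}{\delta_\omega(x)^\alpha}\geq\frac1{r^\alpha}\Bigl(\frac{d+\alpha}{\alpha}\Bigr)^{\alpha/d}\frac{d+\alpha}{d}\bigl(1-\psi_r(x)\bigr).$$ Moreover, for every $\ell\geq0$, every $x\in\Omega$ and every $r>0$, $$|\mathbb{S}^{d-1}|^{-1}\int_{\mathbb{S}^{d-1}}\frac{d\omega}{(\delta_\omega(x)+\ell)^\alpha}\geq\frac1{(r+\ell)^\alpha}\bigl(1-\psi_r(x)\bigr).$$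
   Context: $d\omega$ is the surface measure on the unit sphere $\mathbb{S}^{d-1}$ and $|\mathbb{S}^{d-1}|$ its total measure. If $\delta_\omega(x)=\infty$, the integrands are interpreted as $0$. *)

theory Defs
  imports "HOL-Analysis.Analysis"
begin

text \<open>Surface measure on the unit sphere of a Euclidean space, defined by the
standard cone construction: \<sigma>(A) = d * |{t w : 0 < t < 1, w \<in> A}|,
i.e. d times the push-forward of Lebesgue measure on the punctured unit ball
under the radial projection x \<mapsto> x / |x|.  (This coincides with the
(d-1)-dimensional Hausdorff measure on the sphere.)\<close>
definition sphere_measure :: "'a::euclidean_space measure" where
  "sphere_measure =
     density
       (distr (restrict_space lborel (ball 0 1 - {0}))
              (restrict_space borel (sphere 0 1))
              (\<lambda>x. x /\<^sub>R norm x))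
       (\<lambda>_. ennreal (real DIM('a)))"

text \<open>Directional distance to the boundary: inf{|s| : x + s w \<notin> \<Omega>},
valued in the extended reals (= \<infinity> if the whole line lies in \<Omega>).\<close>
definition dir_dist :: "'a::euclidean_space set \<Rightarrow> 'a \<Rightarrow> 'a \<Rightarrow> ereal" where
  "dir_dist \<Omega> w x = Inf {ereal \<bar>s\<bar> | s. x + s *\<^sub>R w \<notin> \<Omega>}"

definition inv_dist_pow :: "'a::euclidean_space set \<Rightarrow> real \<Rightarrow> real \<Rightarrow> 'a \<Rightarrow> 'a \<Rightarrow> ennreal" where
  "inv_dist_pow \<Omega> \<alpha> l x w =
     (case dir_dist \<Omega> w x of ereal t \<Rightarrow> ennreal (1 / (t + l) powr \<alpha>) | _ \<Rightarrow> 0)"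

definition avg_inv_dist :: "'a::euclidean_space set \<Rightarrow> real \<Rightarrow> real \<Rightarrow> 'a \<Rightarrow> ennreal" where
  "avg_inv_dist \<Omega> \<alpha> l x =
     (\<integral>\<^sup>+ w. inv_dist_pow \<Omega> \<alpha> l x w \<partial>sphere_measure)
       / emeasure (sphere_measure :: 'a measure) (space (sphere_measure :: 'a measure))"

definition psi :: "'a::euclidean_space set \<Rightarrow> real \<Rightarrow> 'a \<Rightarrow> real" where
  "psi \<Omega> r x = measure lborel (\<Omega> \<inter> ball x r) / measure lborel (ball x r)"

end

theory Submission
  imports Defs
begin

(* Fix x and r and let u(\<omega>) = min(\<delta>\<^sub>\<omega>(x), r) / r, a measurable function on the sphere with
values in (0, 1]. Every point x + r t \<omega> with 0 \<le> t < u(\<omega>) lies in \<Omega>, so the star-shaped set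
{t \<omega> : 0 < t < u(\<omega>)} lies in the unit ball and in (\<Omega> - x) / r. Its volume is at least (1/d) times
the surface integral of u^d (shown for step functions, whose star-shaped sets are finite unions of
dilated cones, and for u by approximating it from below), so the spherical average of u^d is at
most \<psi>\<^sub>r(x).

Each of the three bounds then comes from a pointwise inequality 1/(\<delta>\<^sub>\<omega>(x) + l)^\<alpha> \<ge> A + B u(\<omega>)^d
with B \<le> 0, which integrates to A + B \<psi>\<^sub>r(x). Where \<delta>\<^sub>\<omega>(x) < r it is an inequality in the single
variable s = u(\<omega>) \<in> (0, 1): the tangent line of the convex function s \<mapsto> s^(-\<alpha>/d) at \<psi>\<^sub>r(x) for
the first bound, Young's inequality for the second, and monotonicity for the third. Where
\<delta>\<^sub>\<omega>(x) \<ge> r we have u(\<omega>) = 1, and A + B \<le> 0 suffices. The argument works in every dimension. *)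

section \<open>Surface measure of the unit sphere\<close>

lemma space_sphere_measure [simp]: "space (sphere_measure :: 'a::euclidean_space measure) = sphere 0 1"
  by (simp add: sphere_measure_def)

lemma sets_sphere_measure:
  "sets (sphere_measure :: 'a::euclidean_space measure) = sets (restrict_space borel (sphere 0 1))"
  by (simp add: sphere_measure_def)

lemma measurable_radial_projection:
  "(\<lambda>y::'a::euclidean_space. y /\<^sub>R norm y)
     \<in> restrict_space lborel (ball 0 1 - {0}) \<rightarrow>\<^sub>M restrict_space borel (sphere 0 1)"
  by (rule measurable_restrict_space3) auto

lemma integral_sphere_measure:
  fixes g :: "'a::euclidean_space \<Rightarrow> real"
  assumes [measurable]: "g \<in> borel_measurable borel"
  shows "integral\<^sup>L sphere_measure g =
     real DIM('a) * (\<integral>y. indicator (ball 0 1 - {0}) y * g (y /\<^sub>R norm y) \<partial>lborel)"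
proof -
  have "g \<in> borel_measurable (restrict_space borel (sphere 0 1))"
    by (rule measurable_restrict_space1) simp
  then show ?thesis
    unfolding sphere_measure_def
    by (simp add: integral_density integral_distr[OF measurable_radial_projection]
                  integral_restrict_space)
qed

lemma emeasure_sphere_measure:
  "emeasure (sphere_measure :: 'a::euclidean_space measure) (sphere 0 1) =
     ennreal (real DIM('a) * measure lborel (ball (0::'a) 1))"
proof -
  have "sphere (0::'a) 1 \<in> sets (restrict_space borel (sphere 0 1))"
    by (simp add: sets_restrict_space_iff)
  moreover have "(\<lambda>y. y /\<^sub>R norm y) -` sphere 0 1 \<inter> space (restrict_space lborel (ball 0 1 - {0}))
      = ball (0::'a) 1 - {0}"
    by auto
  ultimately have "emeasure (sphere_measure :: 'a measure) (sphere 0 1) =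
      ennreal (real DIM('a)) * emeasure lborel (ball (0::'a) 1 - {0})"
    unfolding sphere_measure_def
    by (simp add: emeasure_density nn_integral_cmult_indicator
          emeasure_distr[OF measurable_radial_projection] emeasure_restrict_space)
  also have "\<dots> = ennreal (real DIM('a)) * emeasure lborel (ball (0::'a) 1)"
    by (subst emeasure_Diff_null_set) auto
  also have "\<dots> = ennreal (real DIM('a) * measure lborel (ball (0::'a) 1))"
    using emeasure_bounded_finite[of "ball (0::'a) 1"]
    by (simp add: emeasure_eq_ennreal_measure ennreal_mult)
  finally show ?thesis .
qed

lemma measure_sphere_measure:
  "measure (sphere_measure :: 'a::euclidean_space measure) (sphere 0 1) =
     real DIM('a) * measure lborel (ball (0::'a) 1)"
  by (simp add: measure_def emeasure_sphere_measure)

lemma measure_sphere_measure_pos: "0 < measure (sphere_measure :: 'a::euclidean_space measure) (sphere 0 1)"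
  using content_ball_pos[of 1 "0::'a"] by (simp add: measure_sphere_measure)

lemma finite_measure_sphere_measure: "finite_measure (sphere_measure :: 'a::euclidean_space measure)"
  by (rule finite_measureI) (simp add: emeasure_sphere_measure)

lemma integrable_sphere_measure:
  fixes g :: "'a::euclidean_space \<Rightarrow> real"
  assumes "g \<in> borel_measurable borel" and "\<And>w. norm w = 1 \<Longrightarrow> \<bar>g w\<bar> \<le> B"
  shows "integrable sphere_measure g"
proof (rule finite_measure.integrable_const_bound[OF finite_measure_sphere_measure])
  show "AE w in sphere_measure. norm (g w) \<le> B"
    using assms(2) by (intro AE_I2) simp
  show "g \<in> borel_measurable sphere_measure"
    using measurable_restrict_space1[OF assms(1)] by (simp add: measurable_cong_sets[OF sets_sphere_measure refl])
qed

section \<open>Directional distance to the boundary\<close>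

lemma dir_dist_nonneg: "0 \<le> dir_dist \<Omega> w x"
  unfolding dir_dist_def by (rule Inf_greatest) auto

lemma mem_if_less_dir_dist: "ereal \<bar>s\<bar> < dir_dist \<Omega> w x \<Longrightarrow> x + s *\<^sub>R w \<in> \<Omega>"
  unfolding dir_dist_def by (metis (mono_tags, lifting) Inf_lower leD mem_Collect_eq)

lemma dir_dist_geI:
  assumes "\<And>s. \<bar>s\<bar> < t \<Longrightarrow> x + s *\<^sub>R w \<in> \<Omega>"
  shows "ereal t \<le> dir_dist \<Omega> w x"
  unfolding dir_dist_def
proof (rule Inf_greatest, clarify)
  fix s assume "x + s *\<^sub>R w \<notin> \<Omega>"
  then show "ereal t \<le> ereal \<bar>s\<bar>"
    using assms by force
qed

lemma dir_dist_pos: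
  fixes \<Omega> :: "'a::euclidean_space set"
  assumes "open \<Omega>" and "x \<in> \<Omega>"
  shows "0 < dir_dist \<Omega> w x"
proof -
  obtain e where e: "0 < e" "ball x e \<subseteq> \<Omega>"
    using assms by (auto simp: open_contains_ball)
  have "ereal (e / (norm w + 1)) \<le> dir_dist \<Omega> w x"
  proof (rule dir_dist_geI)
    fix s assume s: "\<bar>s\<bar> < e / (norm w + 1)"
    have "\<bar>s\<bar> * norm w \<le> \<bar>s\<bar> * (norm w + 1)"
      by (simp add: mult_left_mono)
    also have "\<dots> < e"
      using s by (simp add: pos_less_divide_eq add_nonneg_pos)
    finally show "x + s *\<^sub>R w \<in> \<Omega>"
      using e(2) by (auto simp: dist_norm)
  qed
  moreover have "0 < e / (norm w + 1)"
    using e(1) by (intro divide_pos_pos) (simp_all add: add_nonneg_pos)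
  ultimately show ?thesis
    by (meson ereal_less(2) order_less_le_trans)
qed

(* The segment {x + s w0 : |s| \<le> t} is compact, so some \<epsilon>-neighbourhood of it lies in \<Omega>; that
neighbourhood contains the corresponding segments for all directions w close to w0. *)
lemma dir_dist_ge_near:
  fixes \<Omega> :: "'a::euclidean_space set"
  assumes "open \<Omega>" and "ereal t < dir_dist \<Omega> w0 x"
  shows "\<exists>\<rho>>0. ball w0 \<rho> \<subseteq> {w. ereal t \<le> dir_dist \<Omega> w x}"
proof -
  define K where "K = (\<lambda>s. x + s *\<^sub>R w0) ` {-t..t}"
  have "compact K"
    unfolding K_def by (intro compact_continuous_image continuous_intros) auto
  moreover have "K \<subseteq> \<Omega>"
  proof
    fix k assume "k \<in> K"
    then obtain s where "s \<in> {-t..t}" "k = x + s *\<^sub>R w0"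
      unfolding K_def by blast
    moreover from this(1) have "ereal \<bar>s\<bar> < dir_dist \<Omega> w0 x"
      by (intro le_less_trans[OF _ assms(2)]) auto
    ultimately show "k \<in> \<Omega>"
      by (simp add: mem_if_less_dir_dist)
  qed
  ultimately obtain \<epsilon> where \<epsilon>: "0 < \<epsilon>" "(\<Union>k\<in>K. ball k \<epsilon>) \<subseteq> \<Omega>"
    using compact_subset_open_imp_ball_epsilon_subset assms(1) by metis
  define \<rho> where "\<rho> = \<epsilon> / (\<bar>t\<bar> + 1)"
  have "0 < \<rho>"
    using \<epsilon>(1) by (simp add: \<rho>_def)
  moreover have "ereal t \<le> dir_dist \<Omega> w x" if w: "w \<in> ball w0 \<rho>" for w
  proof (rule dir_dist_geI)
    fix s :: real assume s: "\<bar>s\<bar> < t"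
    have "dist (x + s *\<^sub>R w0) (x + s *\<^sub>R w) = \<bar>s\<bar> * dist w0 w"
      by (simp add: dist_norm scaleR_diff_right[symmetric])
    also have "\<dots> \<le> \<bar>t\<bar> * \<rho>"
      using s w by (intro mult_mono) (auto simp: dist_commute)
    also have "\<dots> < \<epsilon>"
      using \<epsilon>(1) by (simp add: \<rho>_def field_simps)
    finally have "x + s *\<^sub>R w \<in> ball (x + s *\<^sub>R w0) \<epsilon>"
      by simp
    moreover have "x + s *\<^sub>R w0 \<in> K"
      using s unfolding K_def by (intro imageI) auto
    ultimately show "x + s *\<^sub>R w \<in> \<Omega>"
      using \<epsilon>(2) by blast
  qed
  ultimately show ?thesis
    by blast
qed

lemma open_dir_dist_greater:
  fixes \<Omega> :: "'a::euclidean_space set"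
  assumes "open \<Omega>"
  shows "open {w. ereal t < dir_dist \<Omega> w x}"
proof (rule openI)
  fix w0 assume "w0 \<in> {w. ereal t < dir_dist \<Omega> w x}"
  then obtain t' where t't: "ereal t < ereal t'" and "ereal t' < dir_dist \<Omega> w0 x"
    using ereal_dense2 by fastforce
  then obtain \<rho> where "0 < \<rho>" and \<rho>: "ball w0 \<rho> \<subseteq> {w. ereal t' \<le> dir_dist \<Omega> w x}"
    using dir_dist_ge_near[OF assms] by blast
  have "ball w0 \<rho> \<subseteq> {w. ereal t < dir_dist \<Omega> w x}"
    using less_le_trans[OF t't] \<rho> by blast
  then show "\<exists>e>0. ball w0 e \<subseteq> {w. ereal t < dir_dist \<Omega> w x}"
    using \<open>0 < \<rho>\<close> by blast
qed

lemma borel_measurable_dir_dist: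
  fixes \<Omega> :: "'a::euclidean_space set"
  assumes "open \<Omega>"
  shows "(\<lambda>w. dir_dist \<Omega> w x) \<in> borel_measurable borel"
proof (rule borel_measurableI_greater)
  fix y :: ereal
  have "dir_dist \<Omega> w x \<noteq> -\<infinity>" for w
    using dir_dist_nonneg[of \<Omega> w x] by auto
  then show "{w \<in> space borel. y < dir_dist \<Omega> w x} \<in> sets borel"
    using open_dir_dist_greater[OF assms] by (cases y) auto
qed

definition trunc_dir_dist :: "'a::euclidean_space set \<Rightarrow> real \<Rightarrow> 'a \<Rightarrow> 'a \<Rightarrow> real" where
  "trunc_dir_dist \<Omega> r x w = real_of_ereal (min (dir_dist \<Omega> w x) (ereal r)) / r"

lemma trunc_dir_dist_eq:
  assumes "0 < r"
  shows "trunc_dir_dist \<Omega> r x w =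
           (case dir_dist \<Omega> w x of ereal a \<Rightarrow> min a r / r | _ \<Rightarrow> 1)"
  using dir_dist_nonneg[of \<Omega> w x] assms
  by (cases "dir_dist \<Omega> w x") (auto simp: trunc_dir_dist_def min_def)

lemma trunc_dir_dist_le_1: "0 < r \<Longrightarrow> trunc_dir_dist \<Omega> r x w \<le> 1"
  by (auto simp: trunc_dir_dist_eq split: ereal.split)

lemma trunc_dir_dist_pos:
  assumes "open \<Omega>" and "x \<in> \<Omega>" and "0 < r"
  shows "0 < trunc_dir_dist \<Omega> r x w"
  using dir_dist_pos[OF assms(1,2), of w] assms(3)
  by (auto simp: trunc_dir_dist_eq split: ereal.split)

lemma borel_measurable_trunc_dir_dist:
  assumes "open \<Omega>"
  shows "trunc_dir_dist \<Omega> r x \<in> borel_measurable borel"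
  using borel_measurable_dir_dist[OF assms, of x]
  unfolding trunc_dir_dist_def[abs_def] by measurable

lemma mem_if_less_trunc_dir_dist:
  assumes "0 < r" and "0 \<le> \<rho>" and "\<rho> < trunc_dir_dist \<Omega> r x w"
  shows "x + (r * \<rho>) *\<^sub>R w \<in> \<Omega>"
proof (rule mem_if_less_dir_dist)
  show "ereal \<bar>r * \<rho>\<bar> < dir_dist \<Omega> w x"
    using assms dir_dist_nonneg[of \<Omega> w x]
    by (cases "dir_dist \<Omega> w x") (auto simp: trunc_dir_dist_eq field_simps)
qed

lemma inv_dist_pow_ge_trunc_dir_dist:
  assumes "0 < r"
  shows "ennreal (if trunc_dir_dist \<Omega> r x w < 1 then 1 / (r * trunc_dir_dist \<Omega> r x w + l) powr \<alpha> else 0)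
           \<le> inv_dist_pow \<Omega> \<alpha> l x w"
  using assms dir_dist_nonneg[of \<Omega> w x]
  by (cases "dir_dist \<Omega> w x") (auto simp: trunc_dir_dist_eq inv_dist_pow_def min_def)

section \<open>Star-shaped subsets of the unit ball\<close>

lemma measure_lborel_affine_image:
  fixes S :: "'a::euclidean_space set"
  assumes "0 < c" and "S \<in> sets borel" and "(\<lambda>y. c *\<^sub>R y + t) ` S \<in> sets borel"
  shows "measure lborel ((\<lambda>y. c *\<^sub>R y + t) ` S) = c ^ DIM('a) * measure lborel S"
  using measure_lebesgue_affine[of c t S] assms by simp

lemma radial_projection_scaleR:
  fixes y :: "'a::real_normed_vector"
  assumes "0 < c"
  shows "(c *\<^sub>R y) /\<^sub>R norm (c *\<^sub>R y) = y /\<^sub>R norm y"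
  using assms by (simp add: divide_inverse_commute)

lemma scaleR_image_cone:
  fixes P :: "'a::euclidean_space \<Rightarrow> bool"
  assumes "0 < c" and "c \<le> 1"
  shows "(\<lambda>y. c *\<^sub>R y + 0) ` {y \<in> ball 0 1 - {0}. P (y /\<^sub>R norm y)} =
           {y \<in> ball 0 c - {0}. P (y /\<^sub>R norm y)}"
proof (intro equalityI subsetI)
  fix z assume "z \<in> (\<lambda>y. c *\<^sub>R y + 0) ` {y \<in> ball 0 1 - {0}. P (y /\<^sub>R norm y)}"
  then obtain y where y: "y \<in> ball 0 1 - {0}" "P (y /\<^sub>R norm y)" and z: "z = c *\<^sub>R y"
    by auto
  from y(2) have "P (z /\<^sub>R norm z)"
    unfolding z radial_projection_scaleR[OF assms(1)] .
  then show "z \<in> {y \<in> ball 0 c - {0}. P (y /\<^sub>R norm y)}"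
    using y assms by (auto simp: z)
next
  fix z assume z: "z \<in> {y \<in> ball 0 c - {0}. P (y /\<^sub>R norm y)}"
  define y where "y = z /\<^sub>R c"
  have zy: "z = c *\<^sub>R y"
    using assms(1) by (simp add: y_def)
  have "norm y < 1" "y \<noteq> 0"
    using z assms(1) by (auto simp: y_def field_simps)
  moreover have "P (z /\<^sub>R norm z)"
    using z by simp
  then have "P (y /\<^sub>R norm y)"
    unfolding zy radial_projection_scaleR[OF assms(1)] .
  ultimately show "z \<in> (\<lambda>y. c *\<^sub>R y + 0) ` {y \<in> ball 0 1 - {0}. P (y /\<^sub>R norm y)}"
    using zy by auto
qed

lemma measure_truncated_cone:
  fixes P :: "'a::euclidean_space \<Rightarrow> bool"
  assumes "0 < c" and "c \<le> 1" and "{y \<in> ball 0 1 - {0}. P (y /\<^sub>R norm y)} \<in> sets borel"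
  shows "measure lborel {y \<in> ball 0 c - {0}. P (y /\<^sub>R norm y)} =
           c ^ DIM('a) * measure lborel {y \<in> ball 0 1 - {0}. P (y /\<^sub>R norm y)}"
proof -
  have "{y \<in> ball 0 c - {0}. P (y /\<^sub>R norm y)} = ball 0 c \<inter> {y \<in> ball 0 1 - {0}. P (y /\<^sub>R norm y)}"
    using assms(2) by auto
  then have "{y \<in> ball 0 c - {0}. P (y /\<^sub>R norm y)} \<in> sets borel"
    using assms(3) by simp
  then show ?thesis
    using measure_lborel_affine_image[OF assms(1,3), where t=0]
    unfolding scaleR_image_cone[OF assms(1,2)] by blast
qed

lemma integral_cone_step_function:
  fixes q :: "'a::euclidean_space \<Rightarrow> nat" and n :: nat
  assumes [measurable]: "q \<in> borel \<rightarrow>\<^sub>M count_space UNIV"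
    and q_le: "\<And>w. norm w = 1 \<Longrightarrow> q w \<le> n" and "0 < n"
  shows "(\<integral>y. indicator (ball 0 1 - {0}) y * (real (q (y /\<^sub>R norm y)) / n) ^ DIM('a) \<partial>lborel)
           = (\<Sum>k\<le>n. measure lborel {y \<in> ball 0 (k / n) - {0}. q (y /\<^sub>R norm y) = k})"
proof -
  let ?C = "ball (0::'a) 1 - {0}"
  define A where "A k = {y \<in> ?C. q (y /\<^sub>R norm y) = k}" for k
  have [measurable]: "A k \<in> sets borel" for k
    unfolding A_def by measurable
  have A_finite: "emeasure lborel (A k) < \<infinity>" for k
    by (intro emeasure_bounded_finite bounded_subset[OF bounded_ball, of _ 0 1]) (auto simp: A_def)
  have "indicator ?C y * (real (q (y /\<^sub>R norm y)) / n) ^ DIM('a) =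
      (\<Sum>k\<le>n. (real k / n) ^ DIM('a) * indicator (A k) y)" for y
    using q_le[of "y /\<^sub>R norm y"] by (cases "y \<in> ?C") (auto simp: A_def indicator_def)
  then have "(\<integral>y. indicator ?C y * (real (q (y /\<^sub>R norm y)) / n) ^ DIM('a) \<partial>lborel) =
      (\<integral>y. (\<Sum>k\<le>n. (real k / n) ^ DIM('a) * indicator (A k) y) \<partial>lborel)"
    by simp
  also have "\<dots> = (\<Sum>k\<le>n. (real k / n) ^ DIM('a) * measure lborel (A k))"
    using A_finite by (subst Bochner_Integration.integral_sum) auto
  also have "\<dots> = (\<Sum>k\<le>n. measure lborel {y \<in> ball 0 (k / n) - {0}. q (y /\<^sub>R norm y) = k})"
  proof (intro sum.cong refl)
    fix k assume "k \<in> {..n}"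
    then show "(real k / n) ^ DIM('a) * measure lborel (A k) =
        measure lborel {y \<in> ball 0 (k / n) - {0}. q (y /\<^sub>R norm y) = k}"
      using \<open>0 < n\<close> measure_truncated_cone[of "k / n" "\<lambda>w. q w = k"]
      by (cases "k = 0") (auto simp: A_def)
  qed
  finally show ?thesis .
qed

lemma cone_integral_step_function_le_star:
  fixes q :: "'a::euclidean_space \<Rightarrow> nat" and u :: "'a \<Rightarrow> real" and n :: nat
  assumes [measurable]: "q \<in> borel \<rightarrow>\<^sub>M count_space UNIV" "u \<in> borel_measurable borel"
    and q_le: "\<And>w. norm w = 1 \<Longrightarrow> q w \<le> n" and q_u: "\<And>w. norm w = 1 \<Longrightarrow> real (q w) / n \<le> u w"
    and "0 < n"
  shows "(\<integral>y. indicator (ball 0 1 - {0}) y * (real (q (y /\<^sub>R norm y)) / n) ^ DIM('a) \<partial>lborel)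
           \<le> measure lborel {y \<in> ball 0 1 - {0}. norm y < u (y /\<^sub>R norm y)}"
proof -
  define S where "S k = {y \<in> ball 0 (k / n) - {0}. q (y /\<^sub>R norm y) = k}" for k
  have [measurable]: "S k \<in> sets borel" for k
    unfolding S_def by measurable
  have S_ball: "S k \<subseteq> ball 0 1" if "k \<le> n" for k
  proof -
    have "real k / n \<le> 1"
      using that \<open>0 < n\<close> by simp
    then show ?thesis
      by (auto simp: S_def)
  qed
  have S_star: "S k \<subseteq> {y \<in> ball 0 1 - {0}. norm y < u (y /\<^sub>R norm y)}" if "k \<le> n" for k
  proof
    fix y assume y: "y \<in> S k"
    then have "norm y < real (q (y /\<^sub>R norm y)) / n"
      by (simp add: S_def)
    also have "\<dots> \<le> u (y /\<^sub>R norm y)"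
      using y by (intro q_u) (auto simp: S_def)
    finally show "y \<in> {y \<in> ball 0 1 - {0}. norm y < u (y /\<^sub>R norm y)}"
      using S_ball[OF that] y by (auto simp: S_def)
  qed
  have "(\<integral>y. indicator (ball 0 1 - {0}) y * (real (q (y /\<^sub>R norm y)) / n) ^ DIM('a) \<partial>lborel)
      = (\<Sum>k\<le>n. measure lborel (S k))"
    unfolding S_def by (rule integral_cone_step_function[OF _ q_le \<open>0 < n\<close>]) simp_all
  also have "\<dots> = measure lborel (\<Union>k\<le>n. S k)"
    using emeasure_bounded_finite[OF bounded_subset[OF bounded_ball S_ball]]
    by (intro measure_finite_Union[symmetric]) (auto simp: disjoint_family_on_def S_def less_top[symmetric])
  also have "\<dots> \<le> measure lborel {y \<in> ball 0 1 - {0}. norm y < u (y /\<^sub>R norm y)}"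
  proof (intro measure_mono_fmeasurable)
    have "emeasure lborel {y \<in> ball 0 1 - {0}. norm y < u (y /\<^sub>R norm y)} < \<infinity>"
      by (intro emeasure_bounded_finite bounded_subset[OF bounded_ball, of _ 0 1]) auto
    then show "{y \<in> ball 0 1 - {0}. norm y < u (y /\<^sub>R norm y)} \<in> fmeasurable lborel"
      by (simp add: fmeasurable_def)
  qed (use S_star in auto)
  finally show ?thesis .
qed

lemma nat_floor_div_bounds:
  fixes u :: real and n :: nat
  assumes "0 < n" and "0 \<le> u"
  shows "real (nat \<lfloor>n * u\<rfloor>) / n \<le> u" and "u - real (nat \<lfloor>n * u\<rfloor>) / n \<le> 1 / n"
proof -
  have a_eq: "real (nat \<lfloor>n * u\<rfloor>) / n = \<lfloor>n * u\<rfloor> / n"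
    using assms by simp
  have "\<lfloor>n * u\<rfloor> \<le> n * u"
    by linarith
  then show "real (nat \<lfloor>n * u\<rfloor>) / n \<le> u"
    unfolding a_eq using assms(1) by (simp add: field_simps)
  have "u - \<lfloor>n * u\<rfloor> / n = (n * u - \<lfloor>n * u\<rfloor>) / n"
    using assms(1) by (simp add: field_simps)
  also have "\<dots> \<le> 1 / n"
    by (intro divide_right_mono) linarith+
  finally show "u - real (nat \<lfloor>n * u\<rfloor>) / n \<le> 1 / n"
    unfolding a_eq .
qed

lemma power_diff_le_mult_diff:
  fixes a b :: real
  assumes "0 \<le> a" and "a \<le> b" and "b \<le> 1"
  shows "b ^ n - a ^ n \<le> n * (b - a)"
proof (induction n)
  case 0
  then show ?case by simp
next
  case (Suc n)
  have "b ^ Suc n - a ^ Suc n = b * (b ^ n - a ^ n) + a ^ n * (b - a)"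
    by (simp add: algebra_simps)
  also have "\<dots> \<le> 1 * (n * (b - a)) + 1 * (b - a)"
    using assms Suc.IH by (intro add_mono mult_mono) (auto simp: power_le_one power_mono)
  finally show ?case
    by (simp add: algebra_simps)
qed

lemma sphere_integral_power_le_star_measure:
  fixes u :: "'a::euclidean_space \<Rightarrow> real"
  assumes [measurable]: "u \<in> borel_measurable borel"
    and u_nonneg: "\<And>w. norm w = 1 \<Longrightarrow> 0 \<le> u w" and u_le_1: "\<And>w. norm w = 1 \<Longrightarrow> u w \<le> 1"
  shows "integral\<^sup>L sphere_measure (\<lambda>w. u w ^ DIM('a))
           \<le> real DIM('a) * measure lborel {y \<in> ball 0 1 - {0}. norm y < u (y /\<^sub>R norm y)}"
proof -
  let ?M = "real DIM('a) * measure lborel {y \<in> ball 0 1 - {0}. norm y < u (y /\<^sub>R norm y)}"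
  let ?S = "measure sphere_measure (sphere (0::'a) 1)"
  have approx: "integral\<^sup>L sphere_measure (\<lambda>w. u w ^ DIM('a)) \<le> ?M + real DIM('a) * ?S / n"
    if "0 < n" for n :: nat
  proof -
    define q where "q w = nat \<lfloor>n * u w\<rfloor>" for w
    have [measurable]: "q \<in> borel \<rightarrow>\<^sub>M count_space UNIV"
      unfolding q_def by measurable
    note q_bounds = nat_floor_div_bounds[OF \<open>0 < n\<close> u_nonneg, folded q_def]
    have q_le: "q w \<le> n" if "norm w = 1" for w
      using order_trans[OF q_bounds(1) u_le_1, OF that that] \<open>0 < n\<close> by (simp add: divide_le_eq_1)
    have "u w ^ DIM('a) \<le> (real (q w) / n) ^ DIM('a) + real DIM('a) / n" if "norm w = 1" for w
      using power_diff_le_mult_diff[OF _ q_bounds(1) u_le_1, OF _ that that, of "DIM('a)"]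
        mult_left_mono[OF q_bounds(2)[OF that], of "real DIM('a)"]
      by simp
    moreover have int_u: "integrable sphere_measure (\<lambda>w. u w ^ DIM('a))"
      using u_nonneg u_le_1 by (intro integrable_sphere_measure[where B=1]) (auto simp: power_le_one)
    moreover have int_q: "integrable sphere_measure (\<lambda>w. (real (q w) / n) ^ DIM('a))"
      using q_le \<open>0 < n\<close> by (intro integrable_sphere_measure[where B=1]) (auto simp: power_le_one)
    moreover have int_const: "integrable sphere_measure (\<lambda>w. real DIM('a) / n)"
      by (rule finite_measure.integrable_const[OF finite_measure_sphere_measure])
    ultimately have "integral\<^sup>L sphere_measure (\<lambda>w. u w ^ DIM('a)) \<le>
        integral\<^sup>L sphere_measure (\<lambda>w. (real (q w) / n) ^ DIM('a) + real DIM('a) / n)"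
      by (intro integral_mono Bochner_Integration.integrable_add) auto
    also have "\<dots> = integral\<^sup>L sphere_measure (\<lambda>w. (real (q w) / n) ^ DIM('a)) + real DIM('a) * ?S / n"
      by (simp add: Bochner_Integration.integral_add[OF int_q int_const])
    also have "integral\<^sup>L sphere_measure (\<lambda>w. (real (q w) / n) ^ DIM('a)) \<le> ?M"
      using cone_integral_step_function_le_star[of q u n] q_le q_bounds(1) \<open>0 < n\<close>
      by (simp add: integral_sphere_measure)
    finally show ?thesis
      by simp
  qed
  have "(\<lambda>n. ?M + real DIM('a) * ?S / n) \<longlonglongrightarrow> ?M"
    by (intro tendsto_eq_intros lim_const_over_n) auto
  then show ?thesis
    using approx by (intro LIMSEQ_le[OF tendsto_const]) (auto intro: exI[of _ 1])
qed

lemma affine_image_ball_slice: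
  fixes A :: "'a::euclidean_space set"
  assumes "0 < r"
  shows "(\<lambda>y. r *\<^sub>R y + x) ` {y \<in> ball 0 1. x + r *\<^sub>R y \<in> A} = A \<inter> ball x r"
proof (intro equalityI subsetI)
  fix z assume "z \<in> (\<lambda>y. r *\<^sub>R y + x) ` {y \<in> ball 0 1. x + r *\<^sub>R y \<in> A}"
  then show "z \<in> A \<inter> ball x r"
    using assms by (auto simp: dist_norm add.commute)
next
  fix z assume z: "z \<in> A \<inter> ball x r"
  have "z = r *\<^sub>R ((z - x) /\<^sub>R r) + x"
    using assms by simp
  moreover have "norm ((z - x) /\<^sub>R r) = dist x z / r"
    using assms by (simp add: dist_norm norm_minus_commute divide_inverse_commute)
  then have "(z - x) /\<^sub>R r \<in> {y \<in> ball 0 1. x + r *\<^sub>R y \<in> A}"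
    using z assms by simp
  ultimately show "z \<in> (\<lambda>y. r *\<^sub>R y + x) ` {y \<in> ball 0 1. x + r *\<^sub>R y \<in> A}"
    by blast
qed

lemma open_unit_ball_slice:
  fixes A :: "'a::euclidean_space set"
  assumes "open A"
  shows "open {y \<in> ball 0 1. x + r *\<^sub>R y \<in> A}"
proof -
  have "{y \<in> ball 0 1. x + r *\<^sub>R y \<in> A} = ball 0 1 \<inter> (\<lambda>y. x + r *\<^sub>R y) -` A"
    by auto
  also have "open \<dots>"
    using assms by (intro open_Int open_ball open_vimage continuous_intros) auto
  finally show ?thesis .
qed

lemma measure_ball_slice:
  fixes A :: "'a::euclidean_space set"
  assumes "open A" and "0 < r"
  shows "measure lborel (A \<inter> ball x r) = r ^ DIM('a) * measure lborel {y \<in> ball 0 1. x + r *\<^sub>R y \<in> A}"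
proof -
  let ?G = "{y \<in> ball 0 1. x + r *\<^sub>R y \<in> A}"
  have "?G \<in> sets borel"
    using open_unit_ball_slice[OF assms(1)] by simp
  moreover have "(\<lambda>y. r *\<^sub>R y + x) ` ?G \<in> sets borel"
    unfolding affine_image_ball_slice[OF assms(2)] using assms(1) by simp
  ultimately have "measure lborel ((\<lambda>y. r *\<^sub>R y + x) ` ?G) = r ^ DIM('a) * measure lborel ?G"
    by (rule measure_lborel_affine_image[OF assms(2)])
  then show ?thesis
    unfolding affine_image_ball_slice[OF assms(2)] .
qed

lemma psi_eq_unit_ball_slice:
  fixes \<Omega> :: "'a::euclidean_space set"
  assumes "open \<Omega>" and "0 < r"
  shows "psi \<Omega> r x = measure lborel {y \<in> ball 0 1. x + r *\<^sub>R y \<in> \<Omega>} / measure lborel (ball (0::'a) 1)"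
proof -
  have "{y \<in> ball 0 1. x + r *\<^sub>R y \<in> (UNIV :: 'a set)} = ball 0 1"
    by blast
  then have "measure lborel (ball x r) = r ^ DIM('a) * measure lborel (ball (0::'a) 1)"
    using measure_ball_slice[OF open_UNIV assms(2), of x] by (simp only: Int_UNIV_left)
  then show ?thesis
    using measure_ball_slice[OF assms, of x] assms(2) by (simp add: psi_def)
qed

lemma sphere_integral_trunc_dir_dist_power_le_psi:
  fixes \<Omega> :: "'a::euclidean_space set"
  assumes "open \<Omega>" and "x \<in> \<Omega>" and "0 < r"
  shows "integral\<^sup>L sphere_measure (\<lambda>w. trunc_dir_dist \<Omega> r x w ^ DIM('a))
           \<le> psi \<Omega> r x * measure sphere_measure (sphere (0::'a) 1)"
proof -
  let ?u = "trunc_dir_dist \<Omega> r x"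
  let ?G = "{y \<in> ball 0 1. x + r *\<^sub>R y \<in> \<Omega>}"
  have "integral\<^sup>L sphere_measure (\<lambda>w. ?u w ^ DIM('a))
      \<le> real DIM('a) * measure lborel {y \<in> ball 0 1 - {0}. norm y < ?u (y /\<^sub>R norm y)}"
    using borel_measurable_trunc_dir_dist[OF assms(1)] trunc_dir_dist_pos[OF assms] trunc_dir_dist_le_1[OF assms(3)]
    by (intro sphere_integral_power_le_star_measure) (auto intro: less_imp_le)
  also have "\<dots> \<le> real DIM('a) * measure lborel ?G"
  proof (intro mult_left_mono measure_mono_fmeasurable)
    show "{y \<in> ball 0 1 - {0}. norm y < ?u (y /\<^sub>R norm y)} \<subseteq> ?G"
    proof clarify
      fix y :: 'a assume y: "y \<in> ball 0 1" "y \<noteq> 0" "norm y < ?u (y /\<^sub>R norm y)"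
      then have "x + (r * norm y) *\<^sub>R (y /\<^sub>R norm y) \<in> \<Omega>"
        by (intro mem_if_less_trunc_dir_dist assms(3)) auto
      moreover have "(r * norm y) *\<^sub>R (y /\<^sub>R norm y) = r *\<^sub>R y"
        using y(2) by simp
      ultimately show "x + r *\<^sub>R y \<in> \<Omega>"
        by metis
    qed
    show "?G \<in> fmeasurable lborel"
      using open_unit_ball_slice[OF assms(1)]
      by (intro fmeasurableI emeasure_bounded_finite bounded_subset[OF bounded_ball, of _ 0 1]) auto
  qed (use borel_measurable_trunc_dir_dist[OF assms(1)] in measurable)
  also have "\<dots> = psi \<Omega> r x * measure sphere_measure (sphere (0::'a) 1)"
    using content_ball_pos[of 1 "0::'a"]
    by (simp add: psi_eq_unit_ball_slice[OF assms(1,3)] measure_sphere_measure)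
  finally show ?thesis .
qed

section \<open>Spherical averages of the inverse distance\<close>

lemma ennreal_integral_le_nn_integral:
  fixes f :: "'a \<Rightarrow> real"
  assumes "integrable M f"
  shows "ennreal (integral\<^sup>L M f) \<le> (\<integral>\<^sup>+ x. ennreal (f x) \<partial>M)"
proof -
  have "integral\<^sup>L M f \<le> integral\<^sup>L M (\<lambda>x. max 0 (f x))"
    using assms by (intro integral_mono) auto
  then have "ennreal (integral\<^sup>L M f) \<le> ennreal (integral\<^sup>L M (\<lambda>x. max 0 (f x)))"
    by (rule ennreal_leI)
  also have "\<dots> = (\<integral>\<^sup>+ x. ennreal (max 0 (f x)) \<partial>M)"
    using assms by (intro nn_integral_eq_integral[symmetric]) auto
  also have "\<dots> = (\<integral>\<^sup>+ x. ennreal (f x) \<partial>M)"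
    by (intro nn_integral_cong) (simp add: max_def ennreal_neg)
  finally show ?thesis .
qed

lemma avg_inv_dist_ge_average:
  fixes g :: "'a::euclidean_space \<Rightarrow> real"
  assumes "g \<in> borel_measurable borel" and "\<And>w. norm w = 1 \<Longrightarrow> \<bar>g w\<bar> \<le> B"
    and "\<And>w. norm w = 1 \<Longrightarrow> ennreal (g w) \<le> inv_dist_pow \<Omega> \<alpha> l x w"
  shows "ennreal (integral\<^sup>L sphere_measure g / measure sphere_measure (sphere (0::'a) 1))
           \<le> avg_inv_dist \<Omega> \<alpha> l x"
proof -
  let ?S = "measure sphere_measure (sphere (0::'a) 1)"
  have "ennreal (integral\<^sup>L sphere_measure g / ?S) = ennreal (integral\<^sup>L sphere_measure g) / ennreal ?S"
    using measure_sphere_measure_pos[where 'a='a] by (cases "integral\<^sup>L sphere_measure g \<ge> 0") (simp_all add: divide_ennreal ennreal_neg divide_le_0_iff)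
  also have "\<dots> \<le> (\<integral>\<^sup>+ w. inv_dist_pow \<Omega> \<alpha> l x w \<partial>sphere_measure) / ennreal ?S"
  proof (intro divide_right_mono_ennreal order_trans[OF ennreal_integral_le_nn_integral])
    show "integrable sphere_measure g"
      by (rule integrable_sphere_measure[OF assms(1,2)])
    show "(\<integral>\<^sup>+ w. ennreal (g w) \<partial>sphere_measure) \<le> (\<integral>\<^sup>+ w. inv_dist_pow \<Omega> \<alpha> l x w \<partial>sphere_measure)"
      using assms(3) by (intro nn_integral_mono) simp
  qed
  also have "\<dots> = avg_inv_dist \<Omega> \<alpha> l x"
    by (simp add: avg_inv_dist_def emeasure_sphere_measure measure_sphere_measure)
  finally show ?thesis .
qed

lemma avg_inv_dist_ge_affine:
  fixes \<Omega> :: "'a::euclidean_space set"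
  assumes "open \<Omega>" and "x \<in> \<Omega>" and "0 < r" and "B \<le> 0"
    and at_1: "A + B \<le> 0"
    and below_1: "\<And>s. 0 < s \<Longrightarrow> s < 1 \<Longrightarrow> A + B * s ^ DIM('a) \<le> 1 / (r * s + l) powr \<alpha>"
  shows "ennreal (A + B * psi \<Omega> r x) \<le> avg_inv_dist \<Omega> \<alpha> l x"
proof -
  let ?u = "trunc_dir_dist \<Omega> r x"
  let ?S = "measure sphere_measure (sphere (0::'a) 1)"
  note [measurable] = borel_measurable_trunc_dir_dist[OF assms(1)]
  have u: "0 < ?u w" "?u w \<le> 1" for w
    using trunc_dir_dist_pos[OF assms(1-3)] trunc_dir_dist_le_1[OF assms(3)] by auto
  have u_pow: "\<bar>?u w ^ DIM('a)\<bar> \<le> 1" for w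
    using u[of w] by (simp add: power_le_one)
  have "A + B * ?u w ^ DIM('a) \<le> (if ?u w < 1 then 1 / (r * ?u w + l) powr \<alpha> else 0)" for w
    using u[of w] below_1 at_1 by auto
  then have "ennreal (A + B * ?u w ^ DIM('a)) \<le> inv_dist_pow \<Omega> \<alpha> l x w" for w
    by (rule order_trans[OF ennreal_leI inv_dist_pow_ge_trunc_dir_dist[OF assms(3)]])
  moreover have "\<bar>A + B * ?u w ^ DIM('a)\<bar> \<le> \<bar>A\<bar> + \<bar>B\<bar>" for w
    using mult_left_mono[OF u_pow[of w], of "\<bar>B\<bar>"] abs_triangle_ineq[of A "B * ?u w ^ DIM('a)"]
    unfolding abs_mult by linarith
  ultimately have "ennreal (integral\<^sup>L sphere_measure (\<lambda>w. A + B * ?u w ^ DIM('a)) / ?S)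
      \<le> avg_inv_dist \<Omega> \<alpha> l x"
    by (intro avg_inv_dist_ge_average) auto
  moreover have "A + B * psi \<Omega> r x \<le> integral\<^sup>L sphere_measure (\<lambda>w. A + B * ?u w ^ DIM('a)) / ?S"
  proof -
    have "integrable sphere_measure (\<lambda>w. B * ?u w ^ DIM('a))"
      using u_pow by (intro integrable_mult_right integrable_sphere_measure) auto
    then have "integral\<^sup>L sphere_measure (\<lambda>w. A + B * ?u w ^ DIM('a)) =
        A * ?S + B * integral\<^sup>L sphere_measure (\<lambda>w. ?u w ^ DIM('a))"
      using finite_measure.integrable_const[OF finite_measure_sphere_measure]
      by (subst Bochner_Integration.integral_add) auto
    moreover have "B * integral\<^sup>L sphere_measure (\<lambda>w. ?u w ^ DIM('a)) \<ge> B * (psi \<Omega> r x * ?S)"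
      using sphere_integral_trunc_dir_dist_power_le_psi[OF assms(1-3)] assms(4)
      by (rule mult_left_mono_neg)
    ultimately show ?thesis
      using measure_sphere_measure_pos[where 'a='a] by (simp add: field_simps)
  qed
  ultimately show ?thesis
    using ennreal_leI order_trans by blast
qed

lemma avg_inv_dist_ge_linear:
  fixes \<Omega> :: "'a::euclidean_space set"
  assumes "open \<Omega>" and "x \<in> \<Omega>" and "0 < r" and "0 \<le> A"
    and "\<And>s. 0 < s \<Longrightarrow> s < 1 \<Longrightarrow> A * (1 - s ^ DIM('a)) \<le> 1 / (r * s + l) powr \<alpha>"
  shows "ennreal (A * (1 - psi \<Omega> r x)) \<le> avg_inv_dist \<Omega> \<alpha> l x"
  using avg_inv_dist_ge_affine[OF assms(1-3), of "-A" A l \<alpha>] assms(4,5)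
  by (simp add: algebra_simps)

lemma powr_neg_tangent_le:
  fixes s p \<beta> :: real
  assumes "0 < s" and "0 < p" and "0 < \<beta>"
  shows "p powr (-\<beta>) - \<beta> * p powr (-\<beta> - 1) * (s - p) \<le> s powr (-\<beta>)"
proof -
  define z where "z = s / p"
  have z: "0 < z"
    using assms by (simp add: z_def)
  have "1 - \<beta> * ln z \<le> exp (- \<beta> * ln z)"
    using exp_ge_add_one_self[of "-\<beta> * ln z"] by simp
  moreover have "\<beta> * ln z \<le> \<beta> * (z - 1)"
    using ln_le_minus_one[OF z] assms(3) by simp
  ultimately have "1 - \<beta> * (z - 1) \<le> z powr (-\<beta>)"
    using z by (simp add: powr_def)
  then have "p powr (-\<beta>) * (1 - \<beta> * (z - 1)) \<le> p powr (-\<beta>) * z powr (-\<beta>)"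
    by (intro mult_left_mono) auto
  also have "p powr (-\<beta>) * z powr (-\<beta>) = s powr (-\<beta>)"
    using assms by (simp add: z_def powr_mult[symmetric])
  also have "p powr (-\<beta>) * (1 - \<beta> * (z - 1)) = p powr (-\<beta>) - \<beta> * p powr (-\<beta> - 1) * (s - p)"
    using assms by (simp add: z_def powr_diff field_simps powr_minus)
  finally show ?thesis .
qed

lemma avg_inv_dist_ge_psi_powr:
  fixes \<Omega> :: "'a::euclidean_space set"
  assumes "open \<Omega>" and "x \<in> \<Omega>" and "0 < r" and "0 < \<alpha>"
  shows "ennreal ((1 / r powr \<alpha>) * (psi \<Omega> r x powr (- \<alpha> / real DIM('a)) - 1)) \<le> avg_inv_dist \<Omega> \<alpha> 0 x"
proof (cases "psi \<Omega> r x = 0")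
  case True
  then show ?thesis
    by (simp add: ennreal_neg)
next
  case False
  define \<psi> where "\<psi> = psi \<Omega> r x"
  define \<beta> where "\<beta> = \<alpha> / real DIM('a)"
  define R where "R = 1 / r powr \<alpha>"
  define B where "B = - R * \<beta> * \<psi> powr (-\<beta> - 1)"
  define A where "A = R * (\<psi> powr (-\<beta>) - 1) - B * \<psi>"
  have "0 < \<psi>"
    using False by (simp add: \<psi>_def psi_def order_less_le)
  have "0 < \<beta>" "0 < R"
    using assms by (simp_all add: \<beta>_def R_def)
  have tangent: "A + B * t \<le> R * (t powr (-\<beta>) - 1)" if "0 < t" for t
  proof -
    have "A + B * t = R * (\<psi> powr (-\<beta>) - \<beta> * \<psi> powr (-\<beta> - 1) * (t - \<psi>) - 1)"
      by (simp add: A_def B_def algebra_simps)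
    also have "\<dots> \<le> R * (t powr (-\<beta>) - 1)"
      using powr_neg_tangent_le[OF that \<open>0 < \<psi>\<close> \<open>0 < \<beta>\<close>] \<open>0 < R\<close> by simp
    finally show ?thesis .
  qed
  have "ennreal (A + B * psi \<Omega> r x) \<le> avg_inv_dist \<Omega> \<alpha> 0 x"
  proof (rule avg_inv_dist_ge_affine[OF assms(1-3)])
    show "B \<le> 0"
      using \<open>0 < \<beta>\<close> \<open>0 < R\<close> by (simp add: B_def)
    show "A + B \<le> 0"
      using tangent[of 1] by simp
    fix s :: real assume s: "0 < s" "s < 1"
    have "(s ^ DIM('a)) powr (-\<beta>) = s powr (-\<alpha>)"
      using s by (simp add: \<beta>_def powr_realpow[symmetric] powr_powr)
    then have "A + B * s ^ DIM('a) \<le> R * (s powr (-\<alpha>) - 1)"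
      using tangent[of "s ^ DIM('a)"] s by simp
    also have "\<dots> \<le> R * s powr (-\<alpha>)"
      using \<open>0 < R\<close> by simp
    also have "\<dots> = 1 / (r * s + 0) powr \<alpha>"
      using s assms(3) by (simp add: R_def powr_minus powr_mult divide_inverse)
    finally show "A + B * s ^ DIM('a) \<le> 1 / (r * s + 0) powr \<alpha>" .
  qed
  moreover have "A + B * psi \<Omega> r x = (1 / r powr \<alpha>) * (psi \<Omega> r x powr (- \<alpha> / real DIM('a)) - 1)"
    by (simp add: A_def R_def \<psi>_def \<beta>_def)
  ultimately show ?thesis
    by simp
qed

(* The constant is the reciprocal of the maximum of (1 - t^d) t^\<alpha>, attained at t^d = \<alpha>/(d + \<alpha>). *)
lemma Young_one_minus_power_mult_powr:
  fixes t \<alpha> :: real and d :: nat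
  assumes "0 < t" and "t \<le> 1" and "0 < \<alpha>" and "0 < d"
  shows "((d + \<alpha>) / \<alpha>) powr (\<alpha> / d) * ((d + \<alpha>) / d) * (1 - t ^ d) * t powr \<alpha> \<le> 1"
proof (cases "t = 1")
  case True
  then show ?thesis by simp
next
  case False
  then have td: "0 < t ^ d" "t ^ d < 1"
    using assms power_strict_mono[of t 1 d] by auto
  define a where "a = t ^ d * ((d + \<alpha>) / \<alpha>)"
  define b where "b = (1 - t ^ d) * ((d + \<alpha>) / d)"
  define p where "p = \<alpha> / (d + \<alpha>)"
  define q where "q = d / (d + \<alpha>)"
  have "0 < a" "0 < b" "0 < d + \<alpha>"
    using td assms by (auto simp: a_def b_def)
  have "a powr p * b powr q \<le> p * a + q * b"
    using \<open>0 < a\<close> \<open>0 < b\<close> \<open>0 < d + \<alpha>\<close> assms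
    by (intro Youngs_inequality_0) (auto simp: p_def q_def add_divide_distrib[symmetric])
  also have "p * a + q * b = 1"
    using \<open>0 < d + \<alpha>\<close> assms by (simp add: p_def q_def a_def b_def)
  finally have "(a powr p * b powr q) powr ((d + \<alpha>) / d) \<le> 1 powr ((d + \<alpha>) / d)"
    using \<open>0 < d + \<alpha>\<close> by (intro powr_mono2) auto
  also have "(a powr p * b powr q) powr ((d + \<alpha>) / d) = a powr (\<alpha> / d) * b"
    using \<open>0 < a\<close> \<open>0 < b\<close> assms by (simp add: powr_mult powr_powr p_def q_def)
  also have "a powr (\<alpha> / d) = (t ^ d) powr (\<alpha> / d) * ((d + \<alpha>) / \<alpha>) powr (\<alpha> / d)"
    using td assms unfolding a_def by (subst powr_mult) auto
  also have "(t ^ d) powr (\<alpha> / d) = t powr \<alpha>"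
    using assms by (simp add: powr_realpow[symmetric] powr_powr)
  finally show ?thesis
    by (simp add: b_def mult_ac)
qed

lemma avg_inv_dist_ge_one_minus_psi:
  fixes \<Omega> :: "'a::euclidean_space set"
  assumes "open \<Omega>" and "x \<in> \<Omega>" and "0 < r" and "0 < \<alpha>"
  shows "ennreal ((1 / r powr \<alpha>) * ((real DIM('a) + \<alpha>) / \<alpha>) powr (\<alpha> / real DIM('a))
                    * ((real DIM('a) + \<alpha>) / real DIM('a)) * (1 - psi \<Omega> r x))
           \<le> avg_inv_dist \<Omega> \<alpha> 0 x"
proof (rule avg_inv_dist_ge_linear[OF assms(1-3)])
  let ?C = "((real DIM('a) + \<alpha>) / \<alpha>) powr (\<alpha> / real DIM('a)) * ((real DIM('a) + \<alpha>) / real DIM('a))"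
  show "0 \<le> (1 / r powr \<alpha>) * ((real DIM('a) + \<alpha>) / \<alpha>) powr (\<alpha> / real DIM('a)) * ((real DIM('a) + \<alpha>) / real DIM('a))"
    using assms(4) by simp
  fix s :: real assume s: "0 < s" "s < 1"
  have "?C * (1 - s ^ DIM('a)) * s powr \<alpha> \<le> 1"
    using Young_one_minus_power_mult_powr[OF s(1) less_imp_le[OF s(2)] assms(4)] by simp
  then have "?C * (1 - s ^ DIM('a)) \<le> 1 / s powr \<alpha>"
    using s by (simp add: pos_le_divide_eq)
  then have "?C * (1 - s ^ DIM('a)) / r powr \<alpha> \<le> 1 / s powr \<alpha> / r powr \<alpha>"
    by (rule divide_right_mono) simp
  then show "(1 / r powr \<alpha>) * ((real DIM('a) + \<alpha>) / \<alpha>) powr (\<alpha> / real DIM('a))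
      * ((real DIM('a) + \<alpha>) / real DIM('a)) * (1 - s ^ DIM('a)) \<le> 1 / (r * s + 0) powr \<alpha>"
    using s assms(3) by (simp add: powr_mult mult_ac)
qed

lemma avg_inv_dist_shifted_ge_one_minus_psi:
  fixes \<Omega> :: "'a::euclidean_space set"
  assumes "open \<Omega>" and "x \<in> \<Omega>" and "0 < r" and "0 \<le> l" and "0 < \<alpha>"
  shows "ennreal ((1 / (r + l) powr \<alpha>) * (1 - psi \<Omega> r x)) \<le> avg_inv_dist \<Omega> \<alpha> l x"
proof (rule avg_inv_dist_ge_linear[OF assms(1-3)])
  fix s :: real assume s: "0 < s" "s < 1"
  have "0 < r * s + l"
    using s assms by (intro add_pos_nonneg mult_pos_pos) auto
  have "1 / (r + l) powr \<alpha> * (1 - s ^ DIM('a)) \<le> 1 / (r + l) powr \<alpha>"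
    using s by (intro mult_left_le) auto
  also have "\<dots> \<le> 1 / (r * s + l) powr \<alpha>"
    using s assms \<open>0 < r * s + l\<close>
    by (intro divide_left_mono powr_mono2 mult_pos_pos) (auto simp: mult_left_le)
  finally show "1 / (r + l) powr \<alpha> * (1 - s ^ DIM('a)) \<le> 1 / (r * s + l) powr \<alpha>" .
qed simp

theorem lemma3p1:
  fixes \<Omega> :: "'a::euclidean_space set" and \<alpha> :: real
  assumes "DIM('a) \<ge> 2" and "open \<Omega>" and "\<alpha> > 0"
  shows "(\<forall>x\<in>\<Omega>. \<forall>r>0.
            avg_inv_dist \<Omega> \<alpha> 0 x \<ge>
              ennreal ((1 / r powr \<alpha>) * (psi \<Omega> r x powr (- \<alpha> / real DIM('a)) - 1)))
       \<and> (\<forall>x\<in>\<Omega>. \<forall>r>0.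
            avg_inv_dist \<Omega> \<alpha> 0 x \<ge>
              ennreal ((1 / r powr \<alpha>) * ((real DIM('a) + \<alpha>) / \<alpha>) powr (\<alpha> / real DIM('a))
                       * ((real DIM('a) + \<alpha>) / real DIM('a)) * (1 - psi \<Omega> r x)))
       \<and> (\<forall>l\<ge>0. \<forall>x\<in>\<Omega>. \<forall>r>0.
            avg_inv_dist \<Omega> \<alpha> l x \<ge> ennreal ((1 / (r + l) powr \<alpha>) * (1 - psi \<Omega> r x)))"
proof -
  note avg_inv_dist_ge_psi_powr[OF assms(2) _ _ assms(3)]
    avg_inv_dist_ge_one_minus_psi[OF assms(2) _ _ assms(3)]
    avg_inv_dist_shifted_ge_one_minus_psi[OF assms(2) _ _ _ assms(3)]
  then show ?thesis
    by blast
qed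

end
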